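(* For even $m\ge 10$, let $T_m:=K_1\vee\bigl(K_4\cup (m-10)K_1\bigr)$, i.e. the graph consisting of a vertex $u^*$ adjacent to all vertices of a disjoint union of a $K_4$ and $m-10$ isolated vertices (so $T_m$ has $m$ edges). Then $T_m$ is $H(4,3)$-free, $\rho(T_m)>\rho'(m)$ for $m\in\{10,12,14,16\}$, and $\rho(T_m)<\rho'(m)$ for every even $m\ge 18$.
   Context: All graphs are finite, simple and undirected; $\rho(G)$ denotes the adjacency spectral radius of $G$. $H(4,3)$ is the graph obtained from a $4$-cycle and a triangle by identifying one vertex of the $4$-cycle with one vertex of the triangle; $H(4,3)$-free means containing no subgraph isomorphic to $H(4,3)$. $G_1\vee G_2$ denotes the join (disjoint union plus all edges between the two parts), and $\cup$ denotes disjoint union. For even $m$, $\rho'(m)$ is the largest real root of $p_m(x)=x^4-mx^2-(m-2)x+\frac{m}{2}-1$. *)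

theory Defs
  imports Complex_Main
begin

text \<open>A finite simple graph is given by a finite vertex set V and a symmetric,
irreflexive adjacency relation (only its restriction to V matters).\<close>

record 'a sgraph =
  verts :: "'a set"
  adj :: "'a \<Rightarrow> 'a \<Rightarrow> bool"

definition simple_graph :: "'a sgraph \<Rightarrow> bool" where
  "simple_graph G \<longleftrightarrow> finite (verts G) \<and>
     (\<forall>u v. adj G u v \<longrightarrow> adj G v u) \<and> (\<forall>v. \<not> adj G v v) \<and>
     (\<forall>u v. adj G u v \<longrightarrow> u \<in> verts G \<and> v \<in> verts G)"

definition adj_eigenvalue :: "'a sgraph \<Rightarrow> real \<Rightarrow> bool" where
  "adj_eigenvalue G lam \<longleftrightarrow> (\<exists>x :: 'a \<Rightarrow> real.
     (\<exists>v\<in>verts G. x v \<noteq> 0) \<and>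
     (\<forall>v\<in>verts G. (\<Sum>w\<in>{w\<in>verts G. adj G v w}. x w) = lam * x v))"

text \<open>Adjacency spectral radius: the largest absolute value of an eigenvalue of A(G)
(A(G) is real symmetric, so all its eigenvalues are real).\<close>
definition spectral_radius :: "'a sgraph \<Rightarrow> real" where
  "spectral_radius G = Max {\<bar>lam\<bar> | lam. adj_eigenvalue G lam}"

definition contains_subgraph :: "'b sgraph \<Rightarrow> 'a sgraph \<Rightarrow> bool" where
  "contains_subgraph H G \<longleftrightarrow> (\<exists>f. inj_on f (verts H) \<and> f ` verts H \<subseteq> verts G \<and>
     (\<forall>u\<in>verts H. \<forall>v\<in>verts H. adj H u v \<longrightarrow> adj G (f u) (f v)))"

text \<open>H(4,3): the 4-cycle 0-1-2-3-0 and the triangle 0-4-5-0 sharing vertex 0.\<close>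
definition H43 :: "nat sgraph" where
  "H43 = \<lparr> verts = {0..<6},
     adj = (\<lambda>u v. {u, v} \<in> {{0,1},{1,2},{2,3},{3,0},{0,4},{4,5},{5,0}}) \<rparr>"

definition H43_free :: "'a sgraph \<Rightarrow> bool" where
  "H43_free G \<longleftrightarrow> \<not> contains_subgraph H43 G"

text \<open>T_m = K_1 join (K_4 union (m-10) K_1): vertex 0 is u*, vertices 1..4 form K_4,
vertices 5,...,m-6 are the m-10 isolated vertices of K_4 union (m-10)K_1.\<close>
definition T :: "nat \<Rightarrow> nat sgraph" where
  "T m = \<lparr> verts = {0..<m-5},
     adj = (\<lambda>u v. u \<in> {0..<m-5} \<and> v \<in> {0..<m-5} \<and> u \<noteq> v \<and>
                 (u = 0 \<or> v = 0 \<or> (u \<in> {1..4} \<and> v \<in> {1..4}))) \<rparr>"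

definition p_poly :: "nat \<Rightarrow> real \<Rightarrow> real" where
  "p_poly m x = x^4 - real m * x^2 - (real m - 2) * x + real m / 2 - 1"

definition rho' :: "nat \<Rightarrow> real" where
  "rho' m = Max {x. p_poly m x = 0}"

end

theory Submission
  imports Defs "HOL-Computational_Algebra.Polynomial"
begin

(* Every vertex of H(4,3) has two distinct neighbours, whereas in T_m only u* and the
   four vertices of the K_4 do, so H(4,3) cannot be embedded into T_m.

   The partition of T_m into u*, the K_4 and the m - 10 pendant vertices is equitable:
   every eigenvalue of T_m is 0, -1 or a root of the characteristic polynomial of the
   quotient matrix, and every root of it above 3 is an eigenvalue.  Both inequalities are
   then obtained by separating the largest root of this cubic from rho'(m) = the largest
   root of p_m by a point c: a polynomial whose Taylor coefficients at c are nonnegative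
   has no root beyond c, and a change of sign produces one.  For m >= 18 the point is
   c = sqrt m + 1/4; for m <= 16 it is an explicit rational number. *)

lemma cubic_pos_beyond:
  fixes a b d c x :: real
  assumes "c \<le> x" "0 < c^3 + a*c^2 + b*c + d" "0 \<le> 3*c^2 + 2*a*c + b" "0 \<le> 3*c + a"
  shows "0 < x^3 + a*x^2 + b*x + d"
proof -
  define t where "t = x - c"
  have "t \<ge> 0" using assms(1) by (simp add: t_def)
  have "x^3 + a*x^2 + b*x + d =
      (c^3 + a*c^2 + b*c + d) + (3*c^2 + 2*a*c + b)*t + (3*c + a)*t^2 + t^3"
    unfolding t_def by (simp add: power2_eq_square power3_eq_cube algebra_simps)
  moreover have "0 \<le> (3*c^2 + 2*a*c + b)*t" "0 \<le> (3*c + a)*t^2" "0 \<le> t^3"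
    using assms \<open>t \<ge> 0\<close> by simp_all
  ultimately show ?thesis
    using assms(2) by linarith
qed

lemma quartic_pos_beyond:
  fixes b e d c x :: real
  assumes "c \<le> x" "0 \<le> c" "0 < c^4 + b*c^2 + e*c + d" "0 \<le> 4*c^3 + 2*b*c + e" "0 \<le> 6*c^2 + b"
  shows "0 < x^4 + b*x^2 + e*x + d"
proof -
  define t where "t = x - c"
  have "t \<ge> 0" using assms(1) by (simp add: t_def)
  have "x^4 + b*x^2 + e*x + d =
      (c^4 + b*c^2 + e*c + d) + (4*c^3 + 2*b*c + e)*t + (6*c^2 + b)*t^2 + 4*c*t^3 + t^4"
    unfolding t_def by (simp add: power2_eq_square power3_eq_cube power4_eq_xxxx algebra_simps)
  moreover have "0 \<le> (4*c^3 + 2*b*c + e)*t" "0 \<le> (6*c^2 + b)*t^2" "0 \<le> 4*c*t^3" "0 \<le> t^4"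
    using assms \<open>t \<ge> 0\<close> by simp_all
  ultimately show ?thesis
    using assms(3) by linarith
qed

lemma finite_abs_adj_eigenvalues:
  "finite {lam. adj_eigenvalue G lam} \<Longrightarrow> finite {\<bar>lam\<bar> | lam. adj_eigenvalue G lam}"
  by (simp add: setcompr_eq_image)

lemma spectral_radius_ge:
  assumes "finite {lam. adj_eigenvalue G lam}" "adj_eigenvalue G lam"
  shows "\<bar>lam\<bar> \<le> spectral_radius G"
  unfolding spectral_radius_def
  using assms finite_abs_adj_eigenvalues by (intro Max_ge) blast+

lemma spectral_radius_less:
  assumes "finite {lam. adj_eigenvalue G lam}" "adj_eigenvalue G mu"
    and "\<And>lam. adj_eigenvalue G lam \<Longrightarrow> \<bar>lam\<bar> < c"
  shows "spectral_radius G < c"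
  unfolding spectral_radius_def
  using assms finite_abs_adj_eigenvalues by (subst Max_less_iff) blast+

definition degree_ge_two_verts :: "'a sgraph \<Rightarrow> 'a set" where
  "degree_ge_two_verts G =
     {v \<in> verts G. \<exists>a\<in>verts G. \<exists>b\<in>verts G. a \<noteq> b \<and> adj G v a \<and> adj G v b}"

lemma card_le_degree_ge_two_verts:
  assumes "contains_subgraph H G" "finite (verts G)" "degree_ge_two_verts H = verts H"
  shows "card (verts H) \<le> card (degree_ge_two_verts G)"
proof -
  obtain f where inj: "inj_on f (verts H)" and into: "f ` verts H \<subseteq> verts G"
    and hom: "\<forall>u\<in>verts H. \<forall>v\<in>verts H. adj H u v \<longrightarrow> adj G (f u) (f v)"
    using assms(1) unfolding contains_subgraph_def by blast
  have "f ` degree_ge_two_verts H \<subseteq> degree_ge_two_verts G"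
  proof (rule image_subsetI)
    fix u assume "u \<in> degree_ge_two_verts H"
    then obtain a b where ab: "u \<in> verts H" "a \<in> verts H" "b \<in> verts H"
      "a \<noteq> b" "adj H u a" "adj H u b"
      unfolding degree_ge_two_verts_def by blast
    then have "f a \<noteq> f b" "adj G (f u) (f a)" "adj G (f u) (f b)"
      using inj hom by (auto simp: inj_on_def)
    with ab into show "f u \<in> degree_ge_two_verts G"
      unfolding degree_ge_two_verts_def by blast
  qed
  moreover have "finite (degree_ge_two_verts G)"
    using assms(2) unfolding degree_ge_two_verts_def by simp
  ultimately show ?thesis
    using card_inj_on_le[OF inj] assms(3) by simp
qed

lemma degree_ge_two_verts_H43: "degree_ge_two_verts H43 = verts H43"
proof -
  have V: "verts H43 = {0, 1, 2, 3, 4, 5}" by (auto simp: H43_def)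
  have "\<forall>v\<in>verts H43. \<exists>a\<in>verts H43. \<exists>b\<in>verts H43. a \<noteq> b \<and> adj H43 v a \<and> adj H43 v b"
    unfolding V by (simp add: H43_def insert_commute)
  then show ?thesis by (auto simp: degree_ge_two_verts_def)
qed

lemma degree_ge_two_verts_T: "degree_ge_two_verts (T m) \<subseteq> {0..4}"
  unfolding degree_ge_two_verts_def T_def by auto

lemma H43_free_T: "H43_free (T m)"
  unfolding H43_free_def
proof
  assume "contains_subgraph H43 (T m)"
  then have "card (verts H43) \<le> card (degree_ge_two_verts (T m))"
    by (rule card_le_degree_ge_two_verts) (simp_all add: T_def degree_ge_two_verts_H43)
  also have "\<dots> \<le> card {0..4::nat}"
    by (rule card_mono) (simp_all add: degree_ge_two_verts_T)
  finally show False by (simp add: H43_def)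
qed

lemma sum_atLeastAtMost_1_4:
  fixes f :: "nat \<Rightarrow> 'a::comm_monoid_add"
  shows "(\<Sum>i=1..4. f i) = f 1 + f 2 + f 3 + f 4"
proof -
  have "{1..4::nat} = {1, 2, 3, 4}" by auto
  then show ?thesis by (simp add: ac_simps)
qed

lemma
  assumes "m \<ge> 10"
  shows neighbours_T_centre: "{w \<in> verts (T m). adj (T m) 0 w} = {1..<m-5}"
    and neighbours_T_clique: "i \<in> {1..4} \<Longrightarrow> {w \<in> verts (T m). adj (T m) i w} = {0..4} - {i}"
    and neighbours_T_pendant: "l \<in> {5..<m-5} \<Longrightarrow> {w \<in> verts (T m). adj (T m) l w} = {0}"
  using assms by (auto simp: T_def)

lemma eigen_equation_T_iff:
  fixes x :: "nat \<Rightarrow> real"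
  assumes m: "m \<ge> 10"
  shows "(\<forall>v\<in>verts (T m). (\<Sum>w\<in>{w\<in>verts (T m). adj (T m) v w}. x w) = lam * x v) \<longleftrightarrow>
    (\<Sum>i=1..4. x i) + (\<Sum>l=5..<m-5. x l) = lam * x 0 \<and>
    (\<forall>i\<in>{1..4}. x 0 + (\<Sum>j=1..4. x j) - x i = lam * x i) \<and>
    (\<forall>l\<in>{5..<m-5}. x 0 = lam * x l)"
proof -
  have V: "verts (T m) = {0} \<union> {1..4} \<union> {5..<m-5}"
    using m by (auto simp: T_def)
  have centre: "(\<Sum>w\<in>{1..<m-5}. x w) = (\<Sum>i=1..4. x i) + (\<Sum>l=5..<m-5. x l)"
    using m by (simp add: sum.atLeastLessThan_concat flip: atLeastLessThanSuc_atLeastAtMost)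
  have clique: "(\<Sum>w\<in>{0..4} - {i}. x w) = x 0 + (\<Sum>j=1..4. x j) - x i" if "i \<in> {1..4}" for i
    using that by (simp add: sum_diff1 sum.atLeast_Suc_atMost)
  define N where "N v = {w\<in>verts (T m). adj (T m) v w}" for v
  have "(\<forall>v\<in>verts (T m). (\<Sum>w\<in>N v. x w) = lam * x v) \<longleftrightarrow>
    (\<Sum>w\<in>N 0. x w) = lam * x 0 \<and> (\<forall>i\<in>{1..4}. (\<Sum>w\<in>N i. x w) = lam * x i) \<and>
    (\<forall>l\<in>{5..<m-5}. (\<Sum>w\<in>N l. x w) = lam * x l)"
    unfolding V ball_Un by simp
  also have "(\<Sum>w\<in>N 0. x w) = (\<Sum>i=1..4. x i) + (\<Sum>l=5..<m-5. x l)"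
    unfolding N_def neighbours_T_centre[OF m] centre ..
  also have "(\<forall>i\<in>{1..4}. (\<Sum>w\<in>N i. x w) = lam * x i) \<longleftrightarrow>
      (\<forall>i\<in>{1..4}. x 0 + (\<Sum>j=1..4. x j) - x i = lam * x i)"
    unfolding N_def by (intro ball_cong refl) (simp only: neighbours_T_clique[OF m] clique)
  also have "(\<forall>l\<in>{5..<m-5}. (\<Sum>w\<in>N l. x w) = lam * x l) \<longleftrightarrow>
      (\<forall>l\<in>{5..<m-5}. x 0 = lam * x l)"
    unfolding N_def by (intro ball_cong refl) (simp add: neighbours_T_pendant[OF m])
  finally show ?thesis unfolding N_def .
qed

(* The characteristic polynomial of the quotient matrix [[0,4,k],[1,3,0],[1,0,0]] of the
   partition of T_m into u*, the K_4 and the k = m - 10 pendant vertices. *)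
definition char_cubic :: "real \<Rightarrow> real \<Rightarrow> real" where
  "char_cubic k x = x^3 - 3*x^2 - (k + 4)*x + 3*k"

lemma adj_eigenvalue_T_cases:
  assumes m: "m \<ge> 10" and "adj_eigenvalue (T m) lam"
  shows "lam = 0 \<or> lam = -1 \<or> char_cubic (real m - 10) lam = 0"
proof (rule ccontr)
  assume "\<not> ?thesis"
  then have "lam \<noteq> 0" "lam \<noteq> -1" "char_cubic (real m - 10) lam \<noteq> 0" by auto
  obtain x :: "nat \<Rightarrow> real" where nz: "\<exists>v\<in>verts (T m). x v \<noteq> 0"
    and centre: "(\<Sum>i=1..4. x i) + (\<Sum>l=5..<m-5. x l) = lam * x 0"
    and clique: "\<And>i. i \<in> {1..4} \<Longrightarrow> x 0 + (\<Sum>j=1..4. x j) - x i = lam * x i"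
    and pendant: "\<And>l. l \<in> {5..<m-5} \<Longrightarrow> x 0 = lam * x l"
    using assms unfolding adj_eigenvalue_def eigen_equation_T_iff[OF m] by blast
  define s where "s = (\<Sum>i=1..4. x i)"
  define L where "L = (\<Sum>l=5..<m-5. x l)"
  have pendant_sum: "(real m - 10) * x 0 = lam * L"
  proof -
    have "(real m - 10) * x 0 = (\<Sum>l=5..<m-5. x 0)"
      using m by (simp add: of_nat_diff)
    also have "\<dots> = lam * L"
      unfolding L_def sum_distrib_left by (rule sum.cong) (simp_all add: pendant)
    finally show ?thesis .
  qed
  have clique_sum: "4 * x 0 + 3 * s = lam * s"
    using clique[of 1] clique[of 2] clique[of 3] clique[of 4]
    unfolding s_def sum_atLeastAtMost_1_4 by (simp add: algebra_simps)
  have "x 0 \<noteq> 0"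
  proof
    assume x0: "x 0 = 0"
    then have "L = 0" "s = 0"
      using pendant_sum centre \<open>lam \<noteq> 0\<close> by (simp_all add: s_def L_def)
    have "x v = 0" if v: "v \<in> verts (T m)" for v
    proof -
      consider "v = 0" | "v \<in> {1..4}" | "v \<in> {5..<m-5}"
        using v by (force simp: T_def)
      then show ?thesis
      proof cases
        case 2
        then have "(lam + 1) * x v = 0"
          using clique[of v] x0 \<open>s = 0\<close> by (simp add: s_def algebra_simps)
        then show ?thesis using \<open>lam \<noteq> -1\<close> by (simp add: add_eq_0_iff)
      qed (use x0 pendant \<open>lam \<noteq> 0\<close> in auto)
    qed
    with nz show False by blast
  qed
  moreover have "x 0 * char_cubic (real m - 10) lam = 0"
  proof -
    have centre': "lam * x 0 - s - L = 0" and clique': "lam * s - 3 * s - 4 * x 0 = 0"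
      and pendant': "lam * L - (real m - 10) * x 0 = 0"
      using centre clique_sum pendant_sum by (simp_all add: s_def L_def)
    have "x 0 * char_cubic (real m - 10) lam =
        lam * (lam - 3) * (lam * x 0 - s - L) + lam * (lam * s - 3 * s - 4 * x 0)
        + (lam - 3) * (lam * L - (real m - 10) * x 0)"
      by (simp add: char_cubic_def power2_eq_square power3_eq_cube algebra_simps)
    then show ?thesis unfolding centre' clique' pendant' by simp
  qed
  ultimately show False
    using \<open>char_cubic (real m - 10) lam \<noteq> 0\<close> by simp
qed

lemma adj_eigenvalue_T_minus_one:
  assumes m: "m \<ge> 10"
  shows "adj_eigenvalue (T m) (-1)"
proof -
  define x :: "nat \<Rightarrow> real" where "x v = (if v = 1 then 1 else if v = 2 then -1 else 0)" for v
  have "x 0 = 0" "(\<Sum>i=1..4. x i) = 0"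
    unfolding sum_atLeastAtMost_1_4 by (simp_all add: x_def)
  moreover have "x l = 0" if "l \<in> {5..<m-5}" for l
    using that by (simp add: x_def)
  moreover have "x 1 \<noteq> 0" "1 \<in> verts (T m)"
    using m by (simp_all add: x_def T_def)
  ultimately show ?thesis
    unfolding adj_eigenvalue_def eigen_equation_T_iff[OF m]
    by (intro exI[of _ x] conjI ballI bexI[of _ 1]) simp_all
qed

lemma adj_eigenvalue_T_of_root:
  assumes m: "m \<ge> 10" and r: "r > 3" "char_cubic (real m - 10) r = 0"
  shows "adj_eigenvalue (T m) r"
proof -
  define x :: "nat \<Rightarrow> real" where
    "x v = (if v = 0 then 1 else if v \<le> 4 then 1 / (r - 3) else 1 / r)" for v
  have x_clique: "x i = 1 / (r - 3)" if "i \<in> {1..4}" for i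
    using that by (simp add: x_def)
  have x_pendant: "x l = 1 / r" if "l \<in> {5..<m-5}" for l
    using that by (simp add: x_def)
  have "(\<Sum>i=1..4. x i) = (\<Sum>i::nat=1..4. 1 / (r - 3))"
    by (rule sum.cong[OF refl x_clique])
  then have clique_sum: "(\<Sum>i=1..4. x i) = 4 / (r - 3)"
    by simp
  have "(\<Sum>l=5..<m-5. x l) = (\<Sum>l=5..<m-5. 1 / r)"
    by (rule sum.cong[OF refl x_pendant])
  then have pendant_sum: "(\<Sum>l=5..<m-5. x l) = (real m - 10) / r"
    using m by (simp add: of_nat_diff)
  have "4 / (r - 3) + (real m - 10) / r = r * 1"
    using r by (simp add: char_cubic_def field_simps power2_eq_square power3_eq_cube)
  moreover have "1 + 4 / (r - 3) - 1 / (r - 3) = r * (1 / (r - 3))"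
  proof -
    have "1 + 4 / d - 1 / d = (d + 3) * (1 / d)" if "d \<noteq> 0" for d :: real
      using that by (simp add: field_simps)
    from this[of "r - 3"] r show ?thesis by simp
  qed
  moreover have "1 = r * (1 / r)"
    using r by simp
  moreover have "x 0 = 1" "0 \<in> verts (T m)"
    using m by (simp_all add: x_def T_def)
  ultimately show ?thesis
    unfolding adj_eigenvalue_def eigen_equation_T_iff[OF m] clique_sum pendant_sum
    using m by (intro exI[of _ x] conjI ballI bexI[of _ 0]) (simp_all add: x_clique x_pendant of_nat_diff)
qed

lemma finite_adj_eigenvalues_T:
  assumes m: "m \<ge> 10"
  shows "finite {lam. adj_eigenvalue (T m) lam}"
proof -
  define k where "k = real m - 10"
  define Q where "Q = [:3*k, -(k+4), -3, 1:]"
  have "poly Q y = char_cubic k y" for y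
    by (simp add: Q_def char_cubic_def power2_eq_square power3_eq_cube algebra_simps)
  then have "{lam. adj_eigenvalue (T m) lam} \<subseteq> {0, -1} \<union> {y. poly Q y = 0}"
    using adj_eigenvalue_T_cases[OF m] k_def by auto
  moreover have "Q \<noteq> 0" by (simp add: Q_def)
  ultimately show ?thesis
    using poly_roots_finite by (metis finite.simps finite_Un finite_subset)
qed

lemma finite_p_poly_roots: "finite {x. p_poly m x = 0}"
proof -
  define P where "P = [:real m / 2 - 1, -(real m - 2), - real m, 0, 1:]"
  have "poly P x = p_poly m x" for x
    by (simp add: P_def p_poly_def power2_eq_square power3_eq_cube power4_eq_xxxx algebra_simps)
  moreover have "P \<noteq> 0" by (simp add: P_def)
  ultimately show ?thesis
    using poly_roots_finite[of P] by simp
qed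

lemma rho'_ge: "p_poly m x = 0 \<Longrightarrow> x \<le> rho' m"
  unfolding rho'_def using finite_p_poly_roots by (simp add: Max_ge)

lemma p_poly_pos_beyond:
  assumes "c \<le> x" "0 \<le> c" "0 < p_poly m c"
    and "0 \<le> 4*c^3 - 2*real m*c - (real m - 2)" "0 \<le> 6*c^2 - real m"
  shows "0 < p_poly m x"
proof -
  have p: "p_poly m y = y^4 + (- real m)*y^2 + (-(real m - 2))*y + (real m/2 - 1)" for y
    unfolding p_poly_def by (simp add: algebra_simps)
  have "0 < c^4 + (- real m)*c^2 + (-(real m - 2))*c + (real m/2 - 1)"
    using assms(3) unfolding p .
  moreover have "0 \<le> 4*c^3 + 2*(- real m)*c + (-(real m - 2))" "0 \<le> 6*c^2 + (- real m)"
    using assms(4,5) by simp_all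
  ultimately show ?thesis
    unfolding p by (rule quartic_pos_beyond[OF assms(1,2)])
qed

lemma rho'_less:
  assumes "m \<ge> 2" "0 \<le> c" "0 < p_poly m c"
    and "0 \<le> 4*c^3 - 2*real m*c - (real m - 2)" "0 \<le> 6*c^2 - real m"
  shows "rho' m < c"
proof -
  have "\<exists>y\<ge>0. y \<le> 1 \<and> p_poly m y = 0"
  proof (rule IVT2')
    show "continuous_on {0..1} (p_poly m)"
      unfolding p_poly_def by (intro continuous_intros)
  qed (use assms(1) in \<open>simp_all add: p_poly_def\<close>)
  then have "{x. p_poly m x = 0} \<noteq> {}" by blast
  moreover have "x < c" if "p_poly m x = 0" for x
  proof (rule ccontr)
    assume "\<not> x < c"
    then have "0 < p_poly m x"
      using p_poly_pos_beyond[OF _ assms(2-)] by simp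
    with that show False by simp
  qed
  ultimately show ?thesis
    unfolding rho'_def using finite_p_poly_roots by (simp add: Max_less_iff)
qed

lemma char_cubic_pos_large:
  assumes "0 \<le> k" "k + 10 \<le> x"
  shows "0 < char_cubic k x"
proof -
  let ?c = "k + 10"
  have "?c^3 + (-3)*?c^2 + (-(k + 4))*?c + 3*k = k^3 + 26*k^2 + 229*k + 660"
    and "3*?c^2 + 2*(-3)*?c + (-(k + 4)) = 3*k^2 + 53*k + 236"
    by (simp_all add: power2_eq_square power3_eq_cube algebra_simps)
  moreover have "0 \<le> k^3" "0 \<le> k^2"
    using assms(1) by simp_all
  ultimately have "0 < ?c^3 + (-3)*?c^2 + (-(k + 4))*?c + 3*k"
    and "0 \<le> 3*?c^2 + 2*(-3)*?c + (-(k + 4))"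
    using assms(1) by linarith+
  moreover have "0 \<le> 3*?c + (-3)"
    using assms(1) by simp
  ultimately have "0 < x^3 + (-3)*x^2 + (-(k + 4))*x + 3*k"
    using cubic_pos_beyond[OF assms(2)] by blast
  then show ?thesis
    unfolding char_cubic_def by (simp add: algebra_simps)
qed

lemma spectral_radius_T_ge:
  assumes m: "m \<ge> 10" and c: "3 < c" "char_cubic (real m - 10) c < 0"
  shows "c \<le> spectral_radius (T m)"
proof -
  define k where "k = real m - 10"
  have "0 \<le> k" using m by (simp add: k_def)
  have "\<exists>r\<ge>c. r \<le> c + k + 10 \<and> char_cubic k r = 0"
  proof (rule IVT')
    show "0 \<le> char_cubic k (c + k + 10)"
      using c \<open>0 \<le> k\<close> char_cubic_pos_large[of k "c + k + 10"] by simp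
    show "continuous_on {c..c + k + 10} (char_cubic k)"
      unfolding char_cubic_def by (intro continuous_intros)
  qed (use c \<open>0 \<le> k\<close> k_def in auto)
  then obtain r where r: "c \<le> r" "char_cubic k r = 0" by blast
  then have "adj_eigenvalue (T m) r"
    using adj_eigenvalue_T_of_root[OF m] c k_def by simp
  then have "\<bar>r\<bar> \<le> spectral_radius (T m)"
    using spectral_radius_ge finite_adj_eigenvalues_T[OF m] by blast
  with r c show ?thesis by simp
qed

lemma rho'_less_spectral_radius_T:
  assumes "m \<ge> 10" "3 < c" "char_cubic (real m - 10) c < 0" "0 < p_poly m c"
    and "0 \<le> 4*c^3 - 2*real m*c - (real m - 2)" "0 \<le> 6*c^2 - real m"
  shows "rho' m < spectral_radius (T m)"
  using rho'_less[of m c] spectral_radius_T_ge[of m c] assms by simp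

lemma sqrt_bounds_of_ge_18:
  assumes "18 \<le> m"
  shows "424/100 \<le> sqrt (real m)" "4 * sqrt (real m) \<le> real m"
proof -
  show s: "424/100 \<le> sqrt (real m)"
    using assms by (intro real_le_rsqrt) (simp add: power2_eq_square)
  then have "4 * sqrt (real m) \<le> sqrt (real m) * sqrt (real m)"
    by (intro mult_right_mono) simp_all
  then show "4 * sqrt (real m) \<le> real m"
    by simp
qed

lemma char_cubic_pos_beyond_sqrt:
  assumes m: "18 \<le> m" and x: "sqrt (real m) + 1/4 \<le> x"
  shows "0 < char_cubic (real m - 10) x"
proof -
  define s where "s = sqrt (real m)"
  define c where "c = s + 1/4"
  have s: "424/100 \<le> s" "4 * s \<le> s^2" "real m = s^2"
    using sqrt_bounds_of_ge_18[OF m] by (simp_all add: s_def)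
  have "c^3 + (-3)*c^2 + (-(s^2 - 10 + 4))*c + 3*(s^2 - 10) = 1/2*s^2 + 75/16*s - 1835/64"
    and "3*c^2 + 2*(-3)*c + (-(s^2 - 10 + 4)) = 2*s^2 - 9/2*s + 75/16"
    unfolding c_def by (simp_all add: power2_eq_square power3_eq_cube field_simps)
  with s have "0 < c^3 + (-3)*c^2 + (-(s^2 - 10 + 4))*c + 3*(s^2 - 10)"
    and "0 \<le> 3*c^2 + 2*(-3)*c + (-(s^2 - 10 + 4))"
    using m by linarith+
  moreover have "0 \<le> 3*c + (-3)"
    using s(1) by (simp add: c_def)
  moreover have "c \<le> x"
    using x by (simp add: c_def s_def)
  ultimately have "0 < x^3 + (-3)*x^2 + (-(s^2 - 10 + 4))*x + 3*(s^2 - 10)"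
    using cubic_pos_beyond by blast
  then show ?thesis
    unfolding char_cubic_def s(3) by (simp add: algebra_simps)
qed

lemma char_cubic_neg_below_sqrt:
  assumes "x \<le> - sqrt (real m)"
  shows "char_cubic (real m - 10) x < 0"
proof -
  define s where "s = sqrt (real m)"
  define y where "y = - x"
  have "0 \<le> s" "s \<le> y" "real m = s^2"
    using assms by (simp_all add: s_def y_def)
  then have "s^2 \<le> y^2"
    by (simp add: power_mono)
  then have "0 \<le> y * (y^2 - s^2)"
    using \<open>0 \<le> s\<close> \<open>s \<le> y\<close> by simp
  moreover have "char_cubic (real m - 10) x = - y * (y^2 - s^2) - 3*y^2 - 6*y + 3*s^2 - 30"
    unfolding char_cubic_def y_def \<open>real m = s^2\<close>
    by (simp add: power2_eq_square power3_eq_cube algebra_simps)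
  ultimately show ?thesis
    using \<open>s^2 \<le> y^2\<close> \<open>0 \<le> s\<close> \<open>s \<le> y\<close> by linarith
qed

lemma spectral_radius_T_less_sqrt:
  assumes m: "18 \<le> m"
  shows "spectral_radius (T m) < sqrt (real m) + 1/4"
proof (rule spectral_radius_less)
  show "finite {lam. adj_eigenvalue (T m) lam}" "adj_eigenvalue (T m) (-1)"
    using m by (simp_all add: finite_adj_eigenvalues_T adj_eigenvalue_T_minus_one)
  fix lam assume "adj_eigenvalue (T m) lam"
  then have "lam = 0 \<or> lam = -1 \<or> char_cubic (real m - 10) lam = 0"
    using adj_eigenvalue_T_cases m by simp
  then consider "lam = 0 \<or> lam = -1" | "char_cubic (real m - 10) lam = 0"
    by blast
  then show "\<bar>lam\<bar> < sqrt (real m) + 1/4"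
  proof cases
    case 1
    then show ?thesis using sqrt_bounds_of_ge_18[OF m] by auto
  next
    case 2
    then have "lam < sqrt (real m) + 1/4" "- sqrt (real m) < lam"
      using char_cubic_pos_beyond_sqrt[OF m] char_cubic_neg_below_sqrt
      by (metis less_irrefl not_less)+
    then show ?thesis by linarith
  qed
qed

lemma p_poly_sqrt_nonpos:
  assumes m: "18 \<le> m"
  shows "p_poly m (sqrt (real m) + 1/4) \<le> 0"
proof -
  define s where "s = sqrt (real m)"
  have s: "424/100 \<le> s" "4 * s \<le> s^2" "real m = s^2"
    using sqrt_bounds_of_ge_18[OF m] by (simp_all add: s_def)
  have "4 * s^2 \<le> s^3"
    using s(1) by (simp add: power2_eq_square power3_eq_cube mult_right_mono)
  have "p_poly m (s + 1/4) = -(s^3)/2 + 9/16*s^2 + 33/16*s - 127/256"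
    unfolding p_poly_def s(3) by (simp add: power2_eq_square power3_eq_cube power4_eq_xxxx field_simps)
  with s \<open>4 * s^2 \<le> s^3\<close> show ?thesis
    unfolding s_def[symmetric] by linarith
qed

lemma p_poly_self_nonneg:
  assumes "2 \<le> m"
  shows "0 \<le> p_poly m (real m)"
proof -
  define M where "M = real m"
  have "2 \<le> M" using assms by (simp add: M_def)
  then have "2 * M \<le> M^2"
    by (simp add: power2_eq_square mult_right_mono)
  then have "0 \<le> M^2 * (M^2 - M - 1)"
    using \<open>2 \<le> M\<close> by simp
  moreover have "p_poly m M = M^2 * (M^2 - M - 1) + 5/2 * M - 1"
    unfolding p_poly_def M_def by (simp add: power2_eq_square power4_eq_xxxx field_simps)
  ultimately show ?thesis
    using \<open>2 \<le> M\<close> unfolding M_def by linarith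
qed

lemma sqrt_le_rho':
  assumes m: "18 \<le> m"
  shows "sqrt (real m) + 1/4 \<le> rho' m"
proof -
  define c where "c = sqrt (real m) + 1/4"
  have "c \<le> real m"
    using sqrt_bounds_of_ge_18[OF m] unfolding c_def by linarith
  have "\<exists>y\<ge>c. y \<le> real m \<and> p_poly m y = 0"
  proof (rule IVT')
    show "p_poly m c \<le> 0" using p_poly_sqrt_nonpos[OF m] by (simp add: c_def)
    show "0 \<le> p_poly m (real m)" using p_poly_self_nonneg m by simp
    show "continuous_on {c..real m} (p_poly m)"
      unfolding p_poly_def by (intro continuous_intros)
  qed (rule \<open>c \<le> real m\<close>)
  then show ?thesis
    using rho'_ge unfolding c_def by fastforce
qed

lemma separating_point_small_m:
  assumes "m \<in> {10, 12, 14, 16}"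
  obtains c where "3 < c" "char_cubic (real m - 10) c < 0" "0 < p_poly m c"
    "0 \<le> 4*c^3 - 2*real m*c - (real m - 2)" "0 \<le> 6*c^2 - real m"
proof -
  note defs = char_cubic_def p_poly_def power2_eq_square power3_eq_cube power4_eq_xxxx
  consider "m = 10" | "m = 12" | "m = 14" | "m = 16"
    using assms by auto
  then show ?thesis
  proof cases
    case 1
    show ?thesis by (rule that[of "37/10"]) (simp_all add: 1 defs)
  next
    case 2
    show ?thesis by (rule that[of "39/10"]) (simp_all add: 2 defs)
  next
    case 3
    show ?thesis by (rule that[of "415/100"]) (simp_all add: 3 defs)
  next
    case 4
    show ?thesis by (rule that[of "869/200"]) (simp_all add: 4 defs)
  qed
qed

theorem proposition1p2:
  fixes m :: nat
  assumes "even m" and "m \<ge> 10"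
  shows "H43_free (T m)
    \<and> (m \<in> {10, 12, 14, 16} \<longrightarrow> spectral_radius (T m) > rho' m)
    \<and> (m \<ge> 18 \<longrightarrow> spectral_radius (T m) < rho' m)"
proof (intro conjI impI)
  show "H43_free (T m)"
    by (rule H43_free_T)
next
  assume "m \<in> {10, 12, 14, 16}"
  then obtain c where "3 < c" "char_cubic (real m - 10) c < 0" "0 < p_poly m c"
    "0 \<le> 4*c^3 - 2*real m*c - (real m - 2)" "0 \<le> 6*c^2 - real m"
    by (rule separating_point_small_m)
  with \<open>m \<ge> 10\<close> show "spectral_radius (T m) > rho' m"
    by (rule rho'_less_spectral_radius_T)
next
  assume "m \<ge> 18"
  then show "spectral_radius (T m) < rho' m"
    using spectral_radius_T_less_sqrt sqrt_le_rho' by (meson less_le_trans)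
qed

end
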